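(* For a flat virtual braid $\beta\in FVB_n$ let $G(\beta)$ be the quotient of the free group $F_{2n}$ with free basis $x_1,\dots,x_n,y_1,\dots,y_n$ by the relations $\theta(\beta)(x_i)=x_i$, $\theta(\beta)(y_i)=y_i$ ($i=1,\dots,n$) together with the relations $y_1=y_2=\dots=y_n$. Then $G(\beta)$ depends (up to isomorphism) not on the braid $\beta$ but only on its closure $\widehat\beta$: if $\beta\in FVB_n$ and $\beta'\in FVB_{n'}$ have equivalent closures, then $G(\beta)\cong G(\beta')$.
   Context: $FVB_n$ is the flat virtual braid group: generators $\sigma_1,\dots,\sigma_{n-1},\rho_1,\dots,\rho_{n-1}$, relations $\sigma_i\sigma_j=\sigma_j\sigma_i$, $\rho_i\rho_j=\rho_j\rho_i$, $\sigma_i\rho_j=\rho_j\sigma_i$ for $|i-j|\ge2$; $\sigma_i\sigma_{i+1}\sigma_i=\sigma_{i+1}\sigma_i\sigma_{i+1}$; $\rho_i\rho_{i+1}\rho_i=\rho_{i+1}\rho_i\rho_{i+1}$; $\rho_i\rho_{i+1}\sigma_i=\sigma_{i+1}\rho_i\rho_{i+1}$; $\rho_i^2=\sigma_i^2=1$. $\theta:FVB_n\to{\rm Aut}(F_{2n})$ is the homomorphism with $\theta(\sigma_i):x_i\mapsto x_{i+1}y_{i+1},\ x_{i+1}\mapsto x_iy_{i+1}^{-1}$ and $\theta(\rho_i):x_i\leftrightarrow x_{i+1},\ y_i\leftrightarrow y_{i+1}$ (other generators fixed), automorphisms composed on the right, $(fg)(x)=g(f(x))$. The closure $\widehat\beta$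 of a flat virtual braid is the flat virtual link diagram obtained by joining the top and bottom endpoints of its strands (flat crossings for $\sigma_i$, virtual crossings for $\rho_i$), and closures are compared up to equivalence of flat virtual links. *)

theory Defs
  imports "HOL-Algebra.Algebra" "HOL-Library.Multiset"
begin

text \<open>Letters of words in the generators of FVB_n: S i is sigma_i, R i is rho_i (1 <= i <= n-1).
  Every element of FVB_n is represented by such a word (all generators are involutions).\<close>
datatype fvgen = S nat | R nat

fun gidx :: "fvgen \<Rightarrow> nat" where
  "gidx (S i) = i" | "gidx (R i) = i"

definition fvb_word :: "nat \<Rightarrow> fvgen list \<Rightarrow> bool" where
  "fvb_word n w \<longleftrightarrow> (\<forall>g\<in>set w. 1 \<le> gidx g \<and> gidx g < n)"

text \<open>A letter (a, e) is the generator a if e = False and its inverse if e = True.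
  Generators: Inl i = x_i, Inr i = y_i.\<close>
type_synonym 'a fletter = "'a \<times> bool"

fun freduce :: "'a fletter list \<Rightarrow> 'a fletter list" where
  "freduce [] = []"
| "freduce (a # w) = (case freduce w of
      [] \<Rightarrow> [a]
    | b # v \<Rightarrow> (if fst b = fst a \<and> snd b \<noteq> snd a then v else a # b # v))"

definition finv :: "'a fletter list \<Rightarrow> 'a fletter list" where
  "finv u = rev (map (\<lambda>(a, e). (a, \<not> e)) u)"

definition free_group :: "'a set \<Rightarrow> ('a fletter list) monoid" where
  "free_group A = \<lparr> partial_object.carrier = {w. freduce w = w \<and> (\<forall>l\<in>set w. fst l \<in> A)},
                    monoid.mult = (\<lambda>u v. freduce (u @ v)), monoid.one = [] \<rparr>"

definition fsubst :: "('a \<Rightarrow> 'b fletter list) \<Rightarrow> 'a fletter list \<Rightarrow> 'b fletter list" where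
  "fsubst f w = freduce (concat (map (\<lambda>(a, e). if e then finv (f a) else f a) w))"

definition swp :: "nat \<Rightarrow> nat \<Rightarrow> nat" where
  "swp i j = (if j = i then i + 1 else if j = i + 1 then i else j)"

fun theta_gen :: "fvgen \<Rightarrow> (nat + nat) \<Rightarrow> (nat + nat) fletter list" where
  "theta_gen (S i) (Inl j) =
     (if j = i then [(Inl (i+1), False), (Inr (i+1), False)]
      else if j = i + 1 then [(Inl i, False), (Inr (i+1), True)]
      else [(Inl j, False)])"
| "theta_gen (S i) (Inr j) = [(Inr j, False)]"
| "theta_gen (R i) (Inl j) = [(Inl (swp i j), False)]"
| "theta_gen (R i) (Inr j) = [(Inr (swp i j), False)]"

text \<open>theta(beta)(g) for a braid word; automorphisms composed on the right: (fg)(x) = g(f(x)).\<close>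
definition theta :: "fvgen list \<Rightarrow> (nat + nat) \<Rightarrow> (nat + nat) fletter list" where
  "theta w g = foldl (\<lambda>u h. fsubst (theta_gen h) u) [(g, False)] w"

definition gens :: "nat \<Rightarrow> (nat + nat) set" where
  "gens n = Inl ` {1..n} \<union> Inr ` {1..n}"

definition relators :: "nat \<Rightarrow> fvgen list \<Rightarrow> (nat + nat) fletter list set" where
  "relators n w =
     (\<lambda>i. freduce (theta w (Inl i) @ [(Inl i, True)])) ` {1..n}
   \<union> (\<lambda>i. freduce (theta w (Inr i) @ [(Inr i, True)])) ` {1..n}
   \<union> (\<lambda>i. freduce [(Inr 1, False), (Inr i, True)]) ` {1..n}"

definition normal_closure :: "('a, 'b) monoid_scheme \<Rightarrow> 'a set \<Rightarrow> 'a set" where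
  "normal_closure G A = generate G (\<Union>g\<in>carrier G. (\<lambda>r. g \<otimes>\<^bsub>G\<^esub> r \<otimes>\<^bsub>G\<^esub> inv\<^bsub>G\<^esub> g) ` A)"

definition Gb :: "nat \<Rightarrow> fvgen list \<Rightarrow> ((nat + nat) fletter list) set monoid" where
  "Gb n w = free_group (gens n) Mod normal_closure (free_group (gens n)) (relators n w)"

text \<open>A flat Gauss diagram: one cyclic word per component; an endpoint (k, h) is an endpoint of
  chord k, h = True for the head of the arrow.\<close>
type_synonym endpt = "nat \<times> bool"
type_synonym gdiag = "endpt list list"

definition labels :: "gdiag \<Rightarrow> nat set" where
  "labels D = fst ` (\<Union>c\<in>set D. set c)"

text \<open>Realisable triangle configurations for R3 (lines 1,2,3; chords a=c12, b=c13, c=c23),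
  with line i reversed according to e_i.\<close>
definition flipif :: "bool \<Rightarrow> endpt \<Rightarrow> endpt" where
  "flipif f p = (fst p, snd p \<noteq> f)"

definition r3cfg :: "bool \<Rightarrow> bool \<Rightarrow> bool \<Rightarrow> nat \<Rightarrow> nat \<Rightarrow> nat \<Rightarrow> endpt list list" where
  "r3cfg e1 e2 e3 a b c =
    (let fa = (e1 \<noteq> e2); fb = (e1 \<noteq> e3); fc = (e2 \<noteq> e3);
         rv = (\<lambda>e s. if e then rev s else s) in
     [rv e1 [flipif fb (b, True), flipif fa (a, False)],
      rv e2 [flipif fa (a, True), flipif fc (c, False)],
      rv e3 [flipif fc (c, True), flipif fb (b, False)]])"

inductive gstep :: "gdiag \<Rightarrow> gdiag \<Rightarrow> bool" where
  rotate: "gstep ((u @ v) # rest) ((v @ u) # rest)"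
| permute: "mset D' = mset D \<Longrightarrow> gstep D D'"
| relabel: "inj f \<Longrightarrow> gstep D (map (map (\<lambda>(k, h). (f k, h))) D)"
| R1: "k \<notin> labels (w # rest) \<Longrightarrow>
       gstep (w # rest) (([(k, x), (k, \<not> x)] @ w) # rest)"
| R2a: "a \<noteq> b \<Longrightarrow> a \<notin> labels D \<Longrightarrow> b \<notin> labels D \<Longrightarrow> D = w1 # w2 # rest \<Longrightarrow>
       s2 \<in> {[(a, \<not> x), (b, x)], [(b, x), (a, \<not> x)]} \<Longrightarrow>
       gstep D (([(a, x), (b, \<not> x)] @ w1) # (s2 @ w2) # rest)"
| R2b: "a \<noteq> b \<Longrightarrow> a \<notin> labels D \<Longrightarrow> b \<notin> labels D \<Longrightarrow> D = (w1 @ w2) # rest \<Longrightarrow>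
       s2 \<in> {[(a, \<not> x), (b, x)], [(b, x), (a, \<not> x)]} \<Longrightarrow>
       gstep D (([(a, x), (b, \<not> x)] @ w1 @ s2 @ w2) # rest)"
| R3a: "distinct [a, b, c] \<Longrightarrow> distinct [i, j, k] \<Longrightarrow> i < 3 \<Longrightarrow> j < 3 \<Longrightarrow> k < 3 \<Longrightarrow>
       cf = r3cfg e1 e2 e3 a b c \<Longrightarrow>
       gstep ((cf!i @ w1 @ cf!j @ w2 @ cf!k @ w3) # rest)
             ((rev (cf!i) @ w1 @ rev (cf!j) @ w2 @ rev (cf!k) @ w3) # rest)"
| R3b: "distinct [a, b, c] \<Longrightarrow> distinct [i, j, k] \<Longrightarrow> i < 3 \<Longrightarrow> j < 3 \<Longrightarrow> k < 3 \<Longrightarrow>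
       cf = r3cfg e1 e2 e3 a b c \<Longrightarrow>
       gstep ((cf!i @ w1 @ cf!j @ w2) # (cf!k @ w3) # rest)
             ((rev (cf!i) @ w1 @ rev (cf!j) @ w2) # (rev (cf!k) @ w3) # rest)"
| R3c: "distinct [a, b, c] \<Longrightarrow> distinct [i, j, k] \<Longrightarrow> i < 3 \<Longrightarrow> j < 3 \<Longrightarrow> k < 3 \<Longrightarrow>
       cf = r3cfg e1 e2 e3 a b c \<Longrightarrow>
       gstep ((cf!i @ w1) # (cf!j @ w2) # (cf!k @ w3) # rest)
             ((rev (cf!i) @ w1) # (rev (cf!j) @ w2) # (rev (cf!k) @ w3) # rest)"

text \<open>Equivalence of flat virtual links (Gauss diagrams modulo flat Reidemeister moves;
  virtual crossings are invisible in Gauss diagrams).\<close>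
definition flat_equiv :: "gdiag \<Rightarrow> gdiag \<Rightarrow> bool" where
  "flat_equiv = equivclp gstep"

text \<open>Endpoints met by the strand starting at top position p while traversing the word once;
  crossing labels are the indices of the sigma letters in the word. At sigma_i the strand
  coming from position i gets the head.\<close>
fun passf :: "nat \<Rightarrow> fvgen list \<Rightarrow> nat \<Rightarrow> endpt list" where
  "passf k [] p = []"
| "passf k (S i # w) p =
     (if p = i then [(k, True)] else if p = i + 1 then [(k, False)] else []) @ passf (Suc k) w (swp i p)"
| "passf k (R i # w) p = passf (Suc k) w (swp i p)"

definition endpos :: "fvgen list \<Rightarrow> nat \<Rightarrow> nat" where
  "endpos w p = fold (\<lambda>g q. swp (gidx g) q) w p"

definition orbit_len :: "fvgen list \<Rightarrow> nat \<Rightarrow> nat" where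
  "orbit_len w p = (LEAST r. 0 < r \<and> (endpos w ^^ r) p = p)"

definition comp_word :: "fvgen list \<Rightarrow> nat \<Rightarrow> endpt list" where
  "comp_word w p = concat (map (\<lambda>j. passf 0 w ((endpos w ^^ j) p)) [0..<orbit_len w p])"

definition is_rep :: "fvgen list \<Rightarrow> nat \<Rightarrow> bool" where
  "is_rep w p \<longleftrightarrow> (\<forall>j. p \<le> (endpos w ^^ j) p)"

definition closure :: "nat \<Rightarrow> fvgen list \<Rightarrow> gdiag" where
  "closure n w = map (comp_word w) (filter (is_rep w) [1..<Suc n])"

end

theory Submission
  imports Defs
begin

text \<open>Identify all \<open>y\<^sub>i\<close> with a single \<open>y\<close>. Then \<open>\<theta>(\<beta>)(x\<^sub>p)\<close> is \<open>x\<^bsub>\<pi>(p)\<^esub>\<close> followed by a word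
  in \<open>y\<close> of exponent sum \<open>k(p)\<close>, where \<open>\<pi>\<close> is the permutation of the braid and \<open>k(p)\<close> is the
  number of crossings at which strand \<open>p\<close> carries a head minus the number at which it carries a
  tail. So the relations say \<open>x\<^sub>p = x\<^bsub>\<pi>(p)\<^esub> y\<^bsup>k(p)\<^esup>\<close>: along a cycle of \<open>\<pi>\<close>, i.e. a component
  \<open>C\<close> of the closure, every \<open>x\<^sub>p\<close> is one fixed generator times a power of \<open>y\<close> (a potential of
  \<open>k\<close>), and going once around \<open>C\<close> gives \<open>y\<^bsup>e(C)\<^esup> = 1\<close>, with \<open>e(C)\<close> the number of heads minus
  tails on \<open>C\<close>. Hence \<open>G(\<beta>)\<close> is the free product of a free group of rank the number of
  components with a cyclic group whose order is the gcd of the \<open>e(C)\<close>. The multiset of the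
  \<open>e(C)\<close> is invariant under every move of flat equivalence.\<close>

section \<open>Reduced words\<close>

definition cancels :: "'a fletter \<Rightarrow> 'a fletter \<Rightarrow> bool" where
  "cancels a b \<longleftrightarrow> fst b = fst a \<and> snd b \<noteq> snd a"

fun inv_letter :: "'a fletter \<Rightarrow> 'a fletter" where
  "inv_letter (a, e) = (a, \<not> e)"

fun reduced :: "'a fletter list \<Rightarrow> bool" where
  "reduced (a # b # v) \<longleftrightarrow> \<not> cancels a b \<and> reduced (b # v)"
| "reduced _ \<longleftrightarrow> True"

lemma inv_letter_inv_letter [simp]: "inv_letter (inv_letter a) = a"
  by (cases a) simp

lemma cancels_iff: "cancels a b \<longleftrightarrow> b = inv_letter a"
  by (cases a, cases b) (auto simp: cancels_def)

lemma freduce_Cons_eq: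
  "freduce (a # w) =
     (case freduce w of [] \<Rightarrow> [a] | b # v \<Rightarrow> if cancels a b then v else a # b # v)"
  unfolding cancels_def by simp

declare freduce.simps(2) [simp del]

lemma reduced_ConsD: "reduced (b # v) \<Longrightarrow> reduced v"
  by (cases v) auto

lemma reduced_freduce: "reduced (freduce w)"
proof (induction w)
  case (Cons a w)
  then show ?case
    by (cases "freduce w") (auto simp: freduce_Cons_eq dest: reduced_ConsD)
qed simp

lemma freduce_reduced: "reduced w \<Longrightarrow> freduce w = w"
  by (induction w rule: reduced.induct) (auto simp: freduce_Cons_eq)

lemma freduce_idem [simp]: "freduce (freduce w) = freduce w"
  by (rule freduce_reduced[OF reduced_freduce])

lemma freduce_append_freduce_right: "freduce (u @ freduce v) = freduce (u @ v)"
  by (induction u) (auto simp: freduce_Cons_eq)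

lemma freduce_Cons_freduce: "freduce (a # freduce v) = freduce (a # v)"
  using freduce_append_freduce_right[of "[a]" v] by simp

lemma freduce_Cons_inv_letter: "freduce (a # inv_letter a # v) = freduce v"
proof -
  have "freduce (a # inv_letter a # v) = freduce (a # freduce (inv_letter a # v))"
    by (simp add: freduce_Cons_freduce)
  also have "\<dots> = freduce v"
  proof (cases "freduce v")
    case Nil
    then show ?thesis by (simp add: freduce_Cons_eq cancels_iff)
  next
    case (Cons b r)
    have red: "reduced (b # r)" using Cons reduced_freduce[of v] by simp
    show ?thesis
    proof (cases "b = a")
      case True
      then have "freduce (a # r) = a # r" using red by (simp add: freduce_reduced)
      then show ?thesis using Cons True by (simp add: freduce_Cons_eq[of "inv_letter a"] cancels_iff)
    next
      case False
      then have "reduced (inv_letter a # b # r)" using red by (simp add: cancels_iff)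
      then have "freduce (inv_letter a # b # r) = inv_letter a # b # r" by (rule freduce_reduced)
      then show ?thesis using Cons False
        by (simp add: freduce_Cons_eq[of "inv_letter a"] freduce_Cons_eq[of a] cancels_iff)
    qed
  qed
  finally show ?thesis .
qed

lemma freduce_cancel: "freduce (u @ a # inv_letter a # v) = freduce (u @ v)"
  by (metis freduce_append_freduce_right freduce_Cons_inv_letter)

lemma freduce_cancel': "freduce (u @ inv_letter a # a # v) = freduce (u @ v)"
  using freduce_cancel[of u "inv_letter a" v] by simp

lemma freduce_append_freduce_left: "freduce (freduce u @ v) = freduce (u @ v)"
proof (induction u)
  case (Cons a u)
  have e: "freduce ((a # u) @ v) = freduce (a # (freduce u @ v))"
    by (metis Cons.IH append_Cons freduce_Cons_freduce)
  show ?case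
  proof (cases "freduce u")
    case Nil
    then show ?thesis using e by (simp add: freduce_Cons_eq)
  next
    case (Cons b r)
    then show ?thesis
      using e freduce_cancel[of "[]" a "r @ v"] by (auto simp: freduce_Cons_eq cancels_iff)
  qed
qed simp

lemma freduce_assoc: "freduce (freduce (u @ v) @ w) = freduce (u @ freduce (v @ w))"
  by (simp add: freduce_append_freduce_left freduce_append_freduce_right)

lemma finv_Nil [simp]: "finv [] = []"
  by (simp add: finv_def)

lemma finv_Cons: "finv (a # u) = finv u @ [inv_letter a]"
  by (cases a) (simp add: finv_def)

lemma finv_finv [simp]: "finv (finv u) = u"
  by (induction u) (auto simp: finv_def)

lemma fst_set_finv [simp]: "fst ` set (finv u) = fst ` set u"
  by (force simp: finv_def)

lemma freduce_finv_cancel_left: "freduce (finv u @ u @ v) = freduce v"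
proof (induction u arbitrary: v)
  case (Cons a u)
  have "freduce (finv (a # u) @ (a # u) @ v) = freduce (finv u @ inv_letter a # a # u @ v)"
    by (simp add: finv_Cons)
  also have "\<dots> = freduce (finv u @ u @ v)" by (rule freduce_cancel')
  finally show ?case using Cons.IH by simp
qed simp

lemma freduce_finv_cancel_right: "freduce (u @ finv u @ v) = freduce v"
  using freduce_finv_cancel_left[of "finv u" v] by simp

lemma set_freduce_subset: "set (freduce w) \<subseteq> set w"
proof (induction w)
  case (Cons a w)
  then show ?case by (cases "freduce w") (auto simp: freduce_Cons_eq)
qed simp

section \<open>Free groups\<close>

lemma carrier_free_group: "carrier (free_group A) = {w. freduce w = w \<and> (\<forall>l\<in>set w. fst l \<in> A)}"
  by (simp add: free_group_def)

lemma mult_free_group: "u \<otimes>\<^bsub>free_group A\<^esub> v = freduce (u @ v)"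
  by (simp add: free_group_def)

lemma one_free_group: "\<one>\<^bsub>free_group A\<^esub> = []"
  by (simp add: free_group_def)

lemma freduce_in_free_group: "\<forall>l\<in>set u. fst l \<in> A \<Longrightarrow> freduce u \<in> carrier (free_group A)"
  using set_freduce_subset by (fastforce simp: carrier_free_group)

lemma freduce_carrier: "x \<in> carrier (free_group A) \<Longrightarrow> freduce x = x"
  by (simp add: carrier_free_group)

lemma freduce_finv_in_free_group:
  "x \<in> carrier (free_group A) \<Longrightarrow> freduce (finv x) \<in> carrier (free_group A)"
  by (rule freduce_in_free_group) (auto simp: carrier_free_group finv_def)

lemma freduce_finv_mult: "freduce (finv x) \<otimes>\<^bsub>free_group A\<^esub> x = \<one>\<^bsub>free_group A\<^esub>"
  using freduce_finv_cancel_left[of x "[]"]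
  by (simp add: mult_free_group one_free_group freduce_append_freduce_left)

lemma group_free_group: "group (free_group A)"
proof (rule groupI)
  fix x y assume "x \<in> carrier (free_group A)" "y \<in> carrier (free_group A)"
  then show "x \<otimes>\<^bsub>free_group A\<^esub> y \<in> carrier (free_group A)"
    using set_freduce_subset[of "x @ y"] by (auto simp: carrier_free_group mult_free_group)
next
  show "\<one>\<^bsub>free_group A\<^esub> \<in> carrier (free_group A)"
    by (simp add: carrier_free_group one_free_group)
next
  fix x y z
  show "x \<otimes>\<^bsub>free_group A\<^esub> y \<otimes>\<^bsub>free_group A\<^esub> z = x \<otimes>\<^bsub>free_group A\<^esub> (y \<otimes>\<^bsub>free_group A\<^esub> z)"
    by (simp add: mult_free_group freduce_assoc)
next
  fix x assume "x \<in> carrier (free_group A)"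
  then show "\<one>\<^bsub>free_group A\<^esub> \<otimes>\<^bsub>free_group A\<^esub> x = x"
    by (simp add: carrier_free_group one_free_group mult_free_group)
next
  fix x assume "x \<in> carrier (free_group A)"
  then show "\<exists>y\<in>carrier (free_group A). y \<otimes>\<^bsub>free_group A\<^esub> x = \<one>\<^bsub>free_group A\<^esub>"
    using freduce_finv_in_free_group freduce_finv_mult by blast
qed

lemma inv_free_group:
  assumes "x \<in> carrier (free_group A)"
  shows "inv\<^bsub>free_group A\<^esub> x = freduce (finv x)"
  by (rule group.inv_equality[OF group_free_group freduce_finv_mult assms freduce_finv_in_free_group[OF assms]])

lemma letter_in_free_group: "a \<in> A \<Longrightarrow> [(a, e)] \<in> carrier (free_group A)"
  by (simp add: carrier_free_group freduce_Cons_eq)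

lemma inv_free_group_letter: "a \<in> A \<Longrightarrow> inv\<^bsub>free_group A\<^esub> [(a, False)] = [(a, True)]"
  by (simp add: inv_free_group letter_in_free_group finv_def freduce_Cons_eq)

lemma freduce_Cons_mult: "freduce (l # u) = [l] \<otimes>\<^bsub>free_group A\<^esub> freduce u"
  by (simp add: mult_free_group freduce_Cons_freduce)

lemma free_group_Cons_tl:
  assumes "l # w \<in> carrier (free_group A)"
  shows "w \<in> carrier (free_group A)"
proof -
  have "reduced (l # w)" using assms reduced_freduce[of "l # w"] by (simp add: carrier_free_group)
  then have "reduced w" by (rule reduced_ConsD)
  then show ?thesis using assms by (simp add: carrier_free_group freduce_reduced)
qed

definition subst_letter :: "('a \<Rightarrow> 'b fletter list) \<Rightarrow> 'a fletter \<Rightarrow> 'b fletter list" where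
  "subst_letter f l = (if snd l then finv (f (fst l)) else f (fst l))"

lemma fsubst_eq: "fsubst f w = freduce (concat (map (subst_letter f) w))"
  unfolding fsubst_def subst_letter_def by (simp add: case_prod_beta')

lemma fsubst_Nil [simp]: "fsubst f [] = []"
  by (simp add: fsubst_eq)

lemma fsubst_Cons: "fsubst f (l # w) = freduce (subst_letter f l @ fsubst f w)"
  by (simp add: fsubst_eq freduce_append_freduce_right)

lemma fsubst_append: "fsubst f (u @ v) = freduce (fsubst f u @ fsubst f v)"
  by (simp add: fsubst_eq freduce_append_freduce_left freduce_append_freduce_right)

lemma freduce_fsubst [simp]: "freduce (fsubst f w) = fsubst f w"
  by (simp add: fsubst_eq)

lemma fsubst_letter: "fsubst f [(a, False)] = freduce (f a)"
  by (simp add: fsubst_eq subst_letter_def)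

lemma fsubst_freduce: "fsubst f (freduce w) = fsubst f w"
proof (induction w)
  case (Cons a w)
  have e: "fsubst f (a # w) = freduce (subst_letter f a @ fsubst f (freduce w))"
    by (simp add: fsubst_Cons Cons.IH)
  show ?case
  proof (cases "freduce w")
    case Nil
    then show ?thesis using e by (simp add: freduce_Cons_eq fsubst_Cons)
  next
    case (Cons b r)
    show ?thesis
    proof (cases "cancels a b")
      case True
      then have "subst_letter f b = finv (subst_letter f a)"
        by (cases a) (simp add: cancels_iff subst_letter_def)
      then have "fsubst f (a # w) = freduce (fsubst f r)"
        using e Cons
        by (simp add: fsubst_Cons freduce_append_freduce_right freduce_finv_cancel_right)
      then show ?thesis using Cons True by (simp add: freduce_Cons_eq)
    next
      case False
      then show ?thesis using e Cons by (simp add: freduce_Cons_eq fsubst_Cons)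
    qed
  qed
qed simp

lemma fsubst_hom:
  assumes "\<And>a. a \<in> A \<Longrightarrow> f a \<in> carrier (free_group B)"
  shows "fsubst f \<in> hom (free_group A) (free_group B)"
proof (rule homI)
  fix x assume x: "x \<in> carrier (free_group A)"
  have "fst l \<in> B" if l: "l \<in> set (concat (map (subst_letter f) x))" for l
  proof -
    obtain l0 where l0: "l0 \<in> set x" "l \<in> set (subst_letter f l0)"
      using l by (simp only: set_concat set_map) blast
    then have "fst l \<in> fst ` set (f (fst l0))"
      by (metis fst_set_finv image_eqI subst_letter_def)
    moreover have "f (fst l0) \<in> carrier (free_group B)"
      using x l0(1) assms by (auto simp: carrier_free_group)
    ultimately show ?thesis by (auto simp: carrier_free_group)
  qed
  then show "fsubst f x \<in> carrier (free_group B)"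
    unfolding fsubst_eq by (intro freduce_in_free_group) blast
qed (simp add: mult_free_group fsubst_freduce fsubst_append)

lemma free_group_hom_eqI:
  assumes h1: "h1 \<in> hom (free_group A) K" and h2: "h2 \<in> hom (free_group A) K" and K: "group K"
    and gens: "\<And>a. a \<in> A \<Longrightarrow> h1 [(a, False)] = h2 [(a, False)]"
    and u: "u \<in> carrier (free_group A)"
  shows "h1 u = h2 u"
  using u
proof (induction u)
  interpret g1: group_hom "free_group A" K h1
    by (simp add: group_hom_def group_hom_axioms_def group_free_group K h1)
  interpret g2: group_hom "free_group A" K h2
    by (simp add: group_hom_def group_hom_axioms_def group_free_group K h2)
  {
    case Nil
    show ?case using g1.hom_one g2.hom_one by (simp add: one_free_group)
  next
    case (Cons l w)
    obtain a e where l: "l = (a, e)" by (cases l)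
    have a: "a \<in> A" using Cons.prems l by (auto simp: carrier_free_group)
    have w: "w \<in> carrier (free_group A)" using Cons.prems by (rule free_group_Cons_tl)
    have "h1 [l] = h2 [l]"
    proof (cases e)
      case True
      then have "[l] = inv\<^bsub>free_group A\<^esub> [(a, False)]" using inv_free_group_letter[OF a] l by simp
      then show ?thesis using gens[OF a] letter_in_free_group[OF a] by simp
    qed (use gens a l in simp)
    moreover have "l # w = [l] \<otimes>\<^bsub>free_group A\<^esub> w"
      using Cons.prems by (simp add: carrier_free_group mult_free_group)
    ultimately show ?case
      using Cons.IH[OF w] w letter_in_free_group[OF a] l by simp
  }
qed

definition exp_sum :: "'a fletter list \<Rightarrow> int" where
  "exp_sum u = sum_list (map (\<lambda>l. if snd l then -1 else 1) u)"

lemma exp_sum_Nil [simp]: "exp_sum [] = 0"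
  by (simp add: exp_sum_def)

lemma exp_sum_Cons: "exp_sum (l # u) = (if snd l then -1 else 1) + exp_sum u"
  by (simp add: exp_sum_def)

lemma exp_sum_append [simp]: "exp_sum (u @ v) = exp_sum u + exp_sum v"
  by (simp add: exp_sum_def)

lemma hom_freduce_eq_pow_exp_sum:
  assumes K: "group K" and h: "h \<in> hom (free_group A) K" and z: "z \<in> carrier K"
    and letters: "\<And>l. l \<in> set u \<Longrightarrow> fst l \<in> A \<and> h [(fst l, False)] = z"
  shows "h (freduce u) = z [^]\<^bsub>K\<^esub> exp_sum u"
  using letters
proof (induction u)
  interpret group_hom "free_group A" K h
    by (simp add: group_hom_def group_hom_axioms_def K h group_free_group)
  {
    case Nil
    show ?case using hom_one by (simp add: one_free_group)
  next
    case (Cons l u)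
    obtain a e where l: "l = (a, e)" by (cases l)
    have a: "a \<in> A" and ha: "h [(a, False)] = z" using Cons.prems[of l] l by auto
    have "h [l] = z [^]\<^bsub>K\<^esub> (if e then -1 else 1 :: int)"
    proof (cases e)
      case True
      then have "[l] = inv\<^bsub>free_group A\<^esub> [(a, False)]" using inv_free_group_letter[OF a] l by simp
      then show ?thesis using True ha letter_in_free_group[OF a] z by (simp add: H.int_pow_neg)
    qed (use ha l z in simp)
    moreover have "freduce u \<in> carrier (free_group A)"
      using Cons.prems by (intro freduce_in_free_group) auto
    ultimately show ?case
      using Cons l z letter_in_free_group[OF a] freduce_Cons_mult[of l u A]
      by (simp add: exp_sum_Cons H.int_pow_mult)
  }
qed

section \<open>Normal closures and quotients\<close>

definition conjugates :: "('a, 'b) monoid_scheme \<Rightarrow> 'a set \<Rightarrow> 'a set" where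
  "conjugates G A = (\<Union>g\<in>carrier G. (\<lambda>r. g \<otimes>\<^bsub>G\<^esub> r \<otimes>\<^bsub>G\<^esub> inv\<^bsub>G\<^esub> g) ` A)"

lemma normal_closure_conjugates: "normal_closure G A = generate G (conjugates G A)"
  by (simp add: normal_closure_def conjugates_def)

lemma (in group) conjugates_closed: "A \<subseteq> carrier G \<Longrightarrow> conjugates G A \<subseteq> carrier G"
  by (auto simp: conjugates_def)

lemma (in group) normal_closure_normal:
  assumes "A \<subseteq> carrier G"
  shows "normal_closure G A \<lhd> G"
  unfolding normal_closure_conjugates
proof (rule normal_generateI[OF conjugates_closed[OF assms]])
  fix h g assume h: "h \<in> conjugates G A" and g: "g \<in> carrier G"
  then obtain k r where k: "k \<in> carrier G" "r \<in> A" "h = k \<otimes> r \<otimes> inv k"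
    by (auto simp: conjugates_def)
  then have "g \<otimes> h \<otimes> inv g = (g \<otimes> k) \<otimes> r \<otimes> inv (g \<otimes> k)"
    using g assms by (auto simp: m_assoc inv_mult_group)
  then show "g \<otimes> h \<otimes> inv g \<in> conjugates G A"
    using k g unfolding conjugates_def by blast
qed

lemma (in group) normal_closure_incl:
  assumes "A \<subseteq> carrier G" "r \<in> A"
  shows "r \<in> normal_closure G A"
proof -
  have "r = \<one> \<otimes> r \<otimes> inv \<one>" using assms by auto
  then have "r \<in> conjugates G A" using assms unfolding conjugates_def by blast
  then show ?thesis unfolding normal_closure_conjugates by (rule generate.incl)
qed

lemma hom_normal_closure_mem:
  assumes G: "group G" and H: "group H" and h: "h \<in> hom G H" and M: "M \<lhd> H"
    and A: "A \<subseteq> carrier G" and hA: "\<And>a. a \<in> A \<Longrightarrow> h a \<in> M"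
    and x: "x \<in> normal_closure G A"
  shows "h x \<in> M"
proof -
  interpret G: group G by (rule G)
  interpret M: normal M H by (rule M)
  interpret group_hom G H h by (simp add: group_hom_def group_hom_axioms_def G H h)
  have closed: "conjugates G A \<subseteq> carrier G" by (rule G.conjugates_closed[OF A])
  have conj: "h c \<in> M" if c: "c \<in> conjugates G A" for c
  proof -
    obtain k r where k: "k \<in> carrier G" "r \<in> A" "c = k \<otimes>\<^bsub>G\<^esub> r \<otimes>\<^bsub>G\<^esub> inv\<^bsub>G\<^esub> k"
      using c unfolding conjugates_def by blast
    have r: "r \<in> carrier G" using k A by auto
    have "h c = h k \<otimes>\<^bsub>H\<^esub> h r \<otimes>\<^bsub>H\<^esub> inv\<^bsub>H\<^esub> h k" using k r by simp
    then show ?thesis using M.inv_op_closed2[OF hom_closed[OF k(1)] hA[OF k(2)]] by simp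
  qed
  from x[unfolded normal_closure_conjugates] show ?thesis
  proof (induction rule: generate.induct)
    case one
    then show ?case by (simp add: M.one_closed)
  next
    case (incl c)
    then show ?case by (rule conj)
  next
    case (inv c)
    then have "c \<in> carrier G" using closed by auto
    then show ?case using conj[OF inv] by (simp add: M.m_inv_closed)
  next
    case (eng h1 h2)
    then have "h1 \<in> carrier G" "h2 \<in> carrier G" using G.generate_in_carrier[OF closed] by auto
    then show ?case using eng.IH by (simp add: M.m_closed)
  qed
qed

lemma (in normal) rcos_eq_iff:
  assumes "x \<in> carrier G" "y \<in> carrier G"
  shows "H #> x = H #> y \<longleftrightarrow> x \<otimes> inv y \<in> H"
proof
  assume "H #> x = H #> y"
  then have "x \<in> H #> y" using rcos_self[OF assms(1) subgroup_axioms] by simp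
  then show "x \<otimes> inv y \<in> H" using rcos_module_imp[OF is_group assms(2)] by simp
next
  assume "x \<otimes> inv y \<in> H"
  then have "x \<in> H #> y" using rcos_module_rev[OF is_group assms(2) assms(1)] by simp
  then show "H #> x = H #> y" using repr_independence[OF _ assms(2) subgroup_axioms] by simp
qed

lemma FactGroup_iso_by_inverse_homs:
  assumes G: "group G" and H: "group H" and N: "N \<lhd> G" and M: "M \<lhd> H"
    and phi: "phi \<in> hom G H" and psi: "psi \<in> hom H G"
    and phi_N: "\<And>x. x \<in> N \<Longrightarrow> phi x \<in> M"
    and psi_M: "\<And>y. y \<in> M \<Longrightarrow> psi y \<in> N"
    and psi_phi: "\<And>x. x \<in> carrier G \<Longrightarrow> N #>\<^bsub>G\<^esub> psi (phi x) = N #>\<^bsub>G\<^esub> x"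
    and phi_psi: "\<And>y. y \<in> carrier H \<Longrightarrow> M #>\<^bsub>H\<^esub> phi (psi y) = M #>\<^bsub>H\<^esub> y"
  shows "G Mod N \<cong> H Mod M"
proof -
  interpret N: normal N G by (rule N)
  interpret M: normal M H by (rule M)
  interpret phi: group_hom G H phi by (simp add: group_hom_def group_hom_axioms_def G H phi)
  interpret psi: group_hom H G psi by (simp add: group_hom_def group_hom_axioms_def G H psi)
  obtain g1 where g1: "g1 \<in> hom (G Mod N) (H Mod M)"
    "\<And>x. x \<in> carrier G \<Longrightarrow> g1 (N #>\<^bsub>G\<^esub> x) = M #>\<^bsub>H\<^esub> phi x"
  proof (rule FactGroup_universal[OF hom_compose[OF phi M.r_coset_hom_Mod] N])
    fix x y assume xy: "x \<in> carrier G" "y \<in> carrier G" "N #>\<^bsub>G\<^esub> x = N #>\<^bsub>G\<^esub> y"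
    then have "x \<otimes>\<^bsub>G\<^esub> inv\<^bsub>G\<^esub> y \<in> N" using N.rcos_eq_iff by simp
    then have "phi (x \<otimes>\<^bsub>G\<^esub> inv\<^bsub>G\<^esub> y) \<in> M" by (rule phi_N)
    then have "phi x \<otimes>\<^bsub>H\<^esub> inv\<^bsub>H\<^esub> phi y \<in> M" using xy by simp
    then show "((#>\<^bsub>H\<^esub>) M \<circ> phi) x = ((#>\<^bsub>H\<^esub>) M \<circ> phi) y"
      using M.rcos_eq_iff xy by simp
  qed auto
  obtain g2 where g2: "g2 \<in> hom (H Mod M) (G Mod N)"
    "\<And>y. y \<in> carrier H \<Longrightarrow> g2 (M #>\<^bsub>H\<^esub> y) = N #>\<^bsub>G\<^esub> psi y"
  proof (rule FactGroup_universal[OF hom_compose[OF psi N.r_coset_hom_Mod] M])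
    fix x y assume xy: "x \<in> carrier H" "y \<in> carrier H" "M #>\<^bsub>H\<^esub> x = M #>\<^bsub>H\<^esub> y"
    then have "x \<otimes>\<^bsub>H\<^esub> inv\<^bsub>H\<^esub> y \<in> M" using M.rcos_eq_iff by simp
    then have "psi (x \<otimes>\<^bsub>H\<^esub> inv\<^bsub>H\<^esub> y) \<in> N" by (rule psi_M)
    then have "psi x \<otimes>\<^bsub>G\<^esub> inv\<^bsub>G\<^esub> psi y \<in> N" using xy by simp
    then show "((#>\<^bsub>G\<^esub>) N \<circ> psi) x = ((#>\<^bsub>G\<^esub>) N \<circ> psi) y"
      using N.rcos_eq_iff xy by simp
  qed auto
  have "bij_betw g1 (carrier (G Mod N)) (carrier (H Mod M))"
  proof (rule bij_betw_byWitness[where f' = g2])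
    show "\<forall>a\<in>carrier (G Mod N). g2 (g1 a) = a"
      using g1 g2 psi_phi by (auto simp: carrier_FactGroup)
    show "\<forall>a'\<in>carrier (H Mod M). g1 (g2 a') = a'"
      using g1 g2 phi_psi by (auto simp: carrier_FactGroup)
  qed (use g1(1) g2(1) in \<open>auto simp: hom_def\<close>)
  then show ?thesis using g1(1) by (auto simp: iso_def intro: is_isoI)
qed

section \<open>The number of heads minus tails on a component\<close>

definition head_excess :: "endpt list \<Rightarrow> int" where
  "head_excess c = sum_list (map (\<lambda>p. if snd p then 1 else -1) c)"

lemma head_excess_Nil [simp]: "head_excess [] = 0"
  by (simp add: head_excess_def)

lemma head_excess_Cons: "head_excess (p # c) = (if snd p then 1 else -1) + head_excess c"
  by (simp add: head_excess_def)

lemma head_excess_append [simp]: "head_excess (c @ d) = head_excess c + head_excess d"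
  by (simp add: head_excess_def)

lemma head_excess_rev [simp]: "head_excess (rev c) = head_excess c"
  by (induction c) (auto simp: head_excess_Cons)

lemma head_excess_relabel [simp]: "head_excess (map (\<lambda>(k, h). (f k, h)) c) = head_excess c"
  by (induction c) (auto simp: head_excess_Cons)

lemma head_excess_concat_upt:
  "head_excess (concat (map c [0..<m])) = (\<Sum>j<m. head_excess (c j))"
  by (induction m) auto

lemma gstep_head_excess: "gstep D D' \<Longrightarrow> mset (map head_excess D) = mset (map head_excess D')"
proof (induction rule: gstep.induct)
  case (permute D' D)
  then show ?case by (metis mset_map)
qed (auto simp: head_excess_Cons comp_def)

lemma flat_equiv_head_excess:
  "flat_equiv D D' \<Longrightarrow> mset (map head_excess D) = mset (map head_excess D')"
  unfolding flat_equiv_def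
  by (induction rule: equivclp_induct) (auto dest: gstep_head_excess)

section \<open>Orbits of an injective self-map of a finite set\<close>

locale finite_injection =
  fixes f :: "'a::linorder \<Rightarrow> 'a" and S :: "'a set"
  assumes inj: "inj f" and finite_S: "finite S" and closed: "\<And>p. p \<in> S \<Longrightarrow> f p \<in> S"
begin

lemma funpow_closed: "p \<in> S \<Longrightarrow> (f ^^ j) p \<in> S"
  by (induction j) (auto simp: closed)

definition period :: "'a \<Rightarrow> nat" where
  "period p = (LEAST r. 0 < r \<and> (f ^^ r) p = p)"

lemma period_exists:
  assumes "p \<in> S"
  shows "\<exists>r>0. (f ^^ r) p = p"
proof -
  have "{y. \<exists>j. y = (f ^^ j) p} \<subseteq> S" using funpow_closed assms by auto
  then have "finite {y. \<exists>j. y = (f ^^ j) p}" using finite_S finite_subset by blast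
  then show ?thesis using funpow_inj_finite[OF inj] by metis
qed

lemma period_pos: "p \<in> S \<Longrightarrow> 0 < period p"
  using LeastI_ex[OF period_exists] unfolding period_def by blast

lemma funpow_period: "p \<in> S \<Longrightarrow> (f ^^ period p) p = p"
  using LeastI_ex[OF period_exists] unfolding period_def by blast

lemma funpow_less_period: "0 < r \<Longrightarrow> r < period p \<Longrightarrow> (f ^^ r) p \<noteq> p"
  unfolding period_def using not_less_Least by blast

lemma funpow_mod_period: "p \<in> S \<Longrightarrow> (f ^^ (j mod period p)) p = (f ^^ j) p"
  by (rule funpow_mod_eq[OF funpow_period])

lemma inj_on_funpow_period: "inj_on (\<lambda>j. (f ^^ j) p) {..<period p}"
proof (rule linorder_inj_onI')
  fix a b assume ab: "a \<in> {..<period p}" "b \<in> {..<period p}" "a < b"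
  show "(f ^^ a) p \<noteq> (f ^^ b) p"
  proof
    assume "(f ^^ a) p = (f ^^ b) p"
    then have "(f ^^ a) ((f ^^ (b - a)) p) = (f ^^ a) p"
      using ab(3) by (metis add_diff_inverse_nat comp_apply funpow_add less_imp_not_less)
    then have "(f ^^ (b - a)) p = p" using inj_fn[OF inj, of a] by (simp add: inj_def)
    moreover have "0 < b - a" "b - a < period p" using ab by auto
    ultimately show False using funpow_less_period by blast
  qed
qed

lemma funpow_eq_imp_mod_eq:
  assumes "p \<in> S" "(f ^^ a) p = (f ^^ b) p"
  shows "a mod period p = b mod period p"
  using inj_onD[OF inj_on_funpow_period, of "a mod period p" p "b mod period p"]
    funpow_mod_period[OF assms(1)] assms(2) period_pos[OF assms(1)]
  by simp

definition forward_orbit :: "'a \<Rightarrow> 'a set" where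
  "forward_orbit p = range (\<lambda>j. (f ^^ j) p)"

lemma forward_orbit_subset: "p \<in> S \<Longrightarrow> forward_orbit p \<subseteq> S"
  using funpow_closed by (auto simp: forward_orbit_def)

lemma finite_forward_orbit: "p \<in> S \<Longrightarrow> finite (forward_orbit p)"
  using forward_orbit_subset finite_S finite_subset by blast

lemma self_in_forward_orbit: "p \<in> forward_orbit p"
  unfolding forward_orbit_def by (metis funpow_0 rangeI)

lemma forward_orbit_mono: "q \<in> forward_orbit p \<Longrightarrow> forward_orbit q \<subseteq> forward_orbit p"
  unfolding forward_orbit_def by (auto simp flip: comp_apply[of "f ^^ _"] funpow_add)

lemma forward_orbit_sym:
  assumes p: "p \<in> S" and q: "q \<in> forward_orbit p"
  shows "p \<in> forward_orbit q"
proof -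
  obtain a where a: "q = (f ^^ a) p" using q by (auto simp: forward_orbit_def)
  have "(f ^^ ((period p - 1) * a)) q = (f ^^ (a * period p)) p"
    using a period_pos[OF p] by (simp flip: comp_apply[of "f ^^ _"] funpow_add add: algebra_simps)
  also have "\<dots> = p" using funpow_mod_period[OF p, of "a * period p"] by simp
  finally show ?thesis unfolding forward_orbit_def by (metis rangeI)
qed

lemma forward_orbit_eq: "p \<in> S \<Longrightarrow> q \<in> forward_orbit p \<Longrightarrow> forward_orbit q = forward_orbit p"
  by (meson forward_orbit_mono forward_orbit_sym subset_antisym)

definition orbit_min :: "'a \<Rightarrow> 'a" where
  "orbit_min p = Min (forward_orbit p)"

lemma orbit_min_in: "p \<in> S \<Longrightarrow> orbit_min p \<in> forward_orbit p"
  unfolding orbit_min_def using finite_forward_orbit self_in_forward_orbit by (metis Min_in empty_iff)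

lemma orbit_min_closed: "p \<in> S \<Longrightarrow> orbit_min p \<in> S"
  using orbit_min_in forward_orbit_subset by blast

lemma forward_orbit_orbit_min: "p \<in> S \<Longrightarrow> forward_orbit (orbit_min p) = forward_orbit p"
  using forward_orbit_eq orbit_min_in by blast

lemma orbit_min_le_funpow: "p \<in> S \<Longrightarrow> orbit_min p \<le> (f ^^ j) (orbit_min p)"
  using forward_orbit_orbit_min finite_forward_orbit
  unfolding orbit_min_def by (metis Min_le forward_orbit_def rangeI)

lemma orbit_min_eqI: "r \<in> S \<Longrightarrow> \<forall>j. r \<le> (f ^^ j) r \<Longrightarrow> orbit_min r = r"
  unfolding orbit_min_def
  by (rule Min_eqI[OF finite_forward_orbit _ self_in_forward_orbit]) (auto simp: forward_orbit_def)

lemma orbit_min_step: "p \<in> S \<Longrightarrow> orbit_min (f p) = orbit_min p"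
  unfolding orbit_min_def
  by (metis forward_orbit_def forward_orbit_eq funpow_0 funpow_Suc_right o_apply rangeI)

definition steps_from_min :: "'a \<Rightarrow> nat" where
  "steps_from_min p = (LEAST j. (f ^^ j) (orbit_min p) = p)"

lemma funpow_steps_from_min: "p \<in> S \<Longrightarrow> (f ^^ steps_from_min p) (orbit_min p) = p"
  unfolding steps_from_min_def
  by (rule LeastI_ex) (metis forward_orbit_def forward_orbit_orbit_min self_in_forward_orbit rangeE)

lemma steps_from_min_eq_0: "orbit_min r = r \<Longrightarrow> steps_from_min r = 0"
  unfolding steps_from_min_def by simp

definition path_sum :: "('a \<Rightarrow> int) \<Rightarrow> 'a \<Rightarrow> nat \<Rightarrow> int" where
  "path_sum k r j = (\<Sum>l<j. k ((f ^^ l) r))"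

lemma path_sum_0 [simp]: "path_sum k r 0 = 0"
  by (simp add: path_sum_def)

lemma path_sum_Suc: "path_sum k r (Suc j) = path_sum k r j + k ((f ^^ j) r)"
  by (simp add: path_sum_def)

lemma path_sum_period_add:
  assumes r: "r \<in> S"
  shows "path_sum k r (period r + j) = path_sum k r (period r) + path_sum k r j"
proof (induction j)
  case (Suc j)
  have "(f ^^ (period r + j)) r = (f ^^ j) r"
    using funpow_add[of j "period r" f] funpow_period[OF r] by (simp add: add.commute)
  then show ?case using Suc by (simp add: path_sum_Suc)
qed simp

lemma path_sum_mult_period:
  assumes r: "r \<in> S"
  shows "path_sum k r (q * period r + j) = int q * path_sum k r (period r) + path_sum k r j"
proof (induction q)
  case (Suc q)
  then show ?case
    using path_sum_period_add[OF r, of k "q * period r + j"] by (simp add: algebra_simps)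
qed simp

lemma period_sum_dvd_path_sum_diff:
  assumes r: "r \<in> S" and eq: "(f ^^ a) r = (f ^^ b) r"
  shows "path_sum k r (period r) dvd path_sum k r a - path_sum k r b"
proof -
  let ?P = "period r"
  have split: "path_sum k r j = int (j div ?P) * path_sum k r ?P + path_sum k r (j mod ?P)" for j
    using path_sum_mult_period[OF r, of k "j div ?P" "j mod ?P"] unfolding div_mult_mod_eq .
  have "path_sum k r a - path_sum k r b = (int (a div ?P) - int (b div ?P)) * path_sum k r ?P"
    using split[of a] split[of b] funpow_eq_imp_mod_eq[OF r eq] by (simp add: algebra_simps)
  then show ?thesis by simp
qed

definition potential :: "('a \<Rightarrow> int) \<Rightarrow> 'a \<Rightarrow> int" where
  "potential k p = - path_sum k (orbit_min p) (steps_from_min p)"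

lemma potential_orbit_min: "orbit_min r = r \<Longrightarrow> potential k r = 0"
  by (simp add: potential_def steps_from_min_eq_0)

lemma period_sum_dvd_potential_step:
  assumes p: "p \<in> S"
  shows "path_sum k (orbit_min p) (period (orbit_min p)) dvd potential k (f p) + k p - potential k p"
proof -
  let ?r = "orbit_min p"
  have "(f ^^ steps_from_min (f p)) ?r = (f ^^ Suc (steps_from_min p)) ?r"
    using funpow_steps_from_min[OF closed[OF p]] funpow_steps_from_min[OF p] orbit_min_step[OF p]
    by simp
  then have "path_sum k ?r (period ?r) dvd
      path_sum k ?r (steps_from_min (f p)) - path_sum k ?r (Suc (steps_from_min p))"
    by (rule period_sum_dvd_path_sum_diff[OF orbit_min_closed[OF p]])
  moreover have "potential k (f p) + k p - potential k p =
      - (path_sum k ?r (steps_from_min (f p)) - path_sum k ?r (Suc (steps_from_min p)))"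
    using funpow_steps_from_min[OF p] orbit_min_step[OF p] by (simp add: potential_def path_sum_Suc)
  ultimately show ?thesis by (simp add: dvd_diff_commute)
qed

end

section \<open>Strands of a braid word and the action of theta\<close>

lemma swp_swp [simp]: "swp i (swp i j) = j"
  by (auto simp: swp_def)

lemma inj_swp: "inj (swp i)"
  by (metis injI swp_swp)

lemma swp_mem: "1 \<le> i \<Longrightarrow> i < n \<Longrightarrow> j \<in> {1..n} \<Longrightarrow> swp i j \<in> {1..n}"
  by (auto simp: swp_def)

lemma endpos_Nil [simp]: "endpos [] p = p"
  by (simp add: endpos_def)

lemma endpos_snoc: "endpos (w @ [h]) p = swp (gidx h) (endpos w p)"
  by (simp add: endpos_def)

lemma endpos_Cons: "endpos (h # w) p = endpos w (swp (gidx h) p)"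
  by (simp add: endpos_def)

lemma inj_endpos: "inj (endpos w)"
proof (induction w rule: rev_induct)
  case (snoc h w)
  have "endpos (w @ [h]) = swp (gidx h) \<circ> endpos w"
    by (rule ext) (simp add: endpos_snoc)
  moreover have "inj (swp (gidx h) \<circ> endpos w)" by (rule inj_compose[OF inj_swp snoc.IH])
  ultimately show ?case by (simp only:)
qed (simp add: inj_def)

lemma fvb_word_snoc: "fvb_word n (w @ [h]) \<longleftrightarrow> fvb_word n w \<and> 1 \<le> gidx h \<and> gidx h < n"
  by (auto simp: fvb_word_def)

lemma endpos_mem: "fvb_word n w \<Longrightarrow> p \<in> {1..n} \<Longrightarrow> endpos w p \<in> {1..n}"
proof (induction w rule: rev_induct)
  case (snoc h w)
  then show ?case
    using swp_mem[of "gidx h" n "endpos w p"]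
    by (simp add: fvb_word_snoc endpos_snoc del: atLeastAtMost_iff)
qed simp

lemma finite_injection_endpos: "fvb_word n w \<Longrightarrow> finite_injection (endpos w) {1..n}"
  using endpos_mem[of n w] by unfold_locales (simp_all add: inj_endpos)

lemma passf_snoc: "passf k (w @ [h]) p = passf k w p @ passf (k + length w) [h] (endpos w p)"
proof (induction w arbitrary: k p)
  case (Cons g w)
  then show ?case by (cases g) (simp_all add: endpos_Cons)
qed simp

definition strand_excess :: "fvgen list \<Rightarrow> nat \<Rightarrow> int" where
  "strand_excess w p = head_excess (passf 0 w p)"

lemma strand_excess_snoc:
  "strand_excess (w @ [h]) p = strand_excess w p +
     (case h of S i \<Rightarrow> if endpos w p = i then 1 else if endpos w p = i + 1 then -1 else 0 | R i \<Rightarrow> 0)"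
  by (cases h) (auto simp: strand_excess_def passf_snoc head_excess_Cons)

definition y_word :: "nat \<Rightarrow> (nat + nat) fletter list \<Rightarrow> bool" where
  "y_word n u \<longleftrightarrow> (\<forall>l\<in>set u. \<exists>j\<in>{1..n}. fst l = Inr j)"

lemma y_word_Nil [simp]: "y_word n []"
  by (simp add: y_word_def)

lemma y_word_Cons: "y_word n (l # u) \<longleftrightarrow> (\<exists>j\<in>{1..n}. fst l = Inr j) \<and> y_word n u"
  by (simp add: y_word_def)

lemma y_word_append [simp]: "y_word n (u @ v) \<longleftrightarrow> y_word n u \<and> y_word n v"
  by (auto simp: y_word_def)

lemma theta_Nil: "theta [] g = [(g, False)]"
  by (simp add: theta_def)

lemma theta_snoc: "theta (w @ [h]) g = fsubst (theta_gen h) (theta w g)"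
  by (simp add: theta_def)

lemma subst_letter_theta_gen_Inr:
  assumes "j \<in> {1..n}" "1 \<le> gidx h" "gidx h < n"
  shows "\<exists>j'\<in>{1..n}. subst_letter (theta_gen h) (Inr j, e) = [(Inr j', e)]"
  using assms swp_mem[of _ n j] by (cases h) (auto simp: subst_letter_def finv_def)

lemma y_word_subst_theta_gen:
  assumes "y_word n u" "1 \<le> gidx h" "gidx h < n"
  shows "y_word n (concat (map (subst_letter (theta_gen h)) u))
    \<and> exp_sum (concat (map (subst_letter (theta_gen h)) u)) = exp_sum u"
  using assms(1)
proof (induction u)
  case (Cons l u)
  obtain j e where l: "l = (Inr j, e)" "j \<in> {1..n}"
    using Cons.prems by (cases l) (auto simp: y_word_Cons)
  obtain j' where "j' \<in> {1..n}" "subst_letter (theta_gen h) (Inr j, e) = [(Inr j', e)]"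
    using subst_letter_theta_gen_Inr[OF l(2) assms(2,3)] by blast
  then show ?case using Cons l by (auto simp: y_word_Cons exp_sum_Cons)
qed simp

lemma theta_Inl:
  assumes "fvb_word n w"
  shows "\<exists>u. theta w (Inl p) = freduce ((Inl (endpos w p), False) # u)
    \<and> y_word n u \<and> exp_sum u = strand_excess w p"
  using assms
proof (induction w rule: rev_induct)
  case Nil
  show ?case
    by (intro exI[of _ "[]"]) (simp add: theta_Nil freduce_Cons_eq strand_excess_def)
next
  case (snoc h w)
  have w: "fvb_word n w" and h: "1 \<le> gidx h" "gidx h < n"
    using snoc.prems by (auto simp: fvb_word_snoc)
  obtain u where u: "theta w (Inl p) = freduce ((Inl (endpos w p), False) # u)"
    "y_word n u" "exp_sum u = strand_excess w p"
    using snoc.IH[OF w] by blast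
  define q where "q = endpos w p"
  define z :: "(nat + nat) fletter list" where
    "z = (case h of S i \<Rightarrow> if q = i then [(Inr (i + 1), False)]
                          else if q = i + 1 then [(Inr (i + 1), True)] else []
                  | R i \<Rightarrow> [])"
  define u' where "u' = concat (map (subst_letter (theta_gen h)) u)"
  have gen: "theta_gen h (Inl q) = (Inl (swp (gidx h) q), False) # z"
    by (cases h) (auto simp: swp_def z_def)
  have z: "y_word n z" "strand_excess (w @ [h]) p = strand_excess w p + exp_sum z"
    using h by (cases h; auto simp: z_def y_word_def strand_excess_snoc q_def exp_sum_Cons)+
  have u': "y_word n u'" "exp_sum u' = exp_sum u"
    using y_word_subst_theta_gen[OF u(2) h] by (auto simp: u'_def)
  have "theta (w @ [h]) (Inl p) = fsubst (theta_gen h) ((Inl q, False) # u)"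
    by (simp only: theta_snoc u(1) fsubst_freduce q_def)
  also have "\<dots> = freduce (theta_gen h (Inl q) @ u')"
    by (simp add: fsubst_Cons subst_letter_def fsubst_eq u'_def freduce_append_freduce_right)
  also have "\<dots> = freduce ((Inl (endpos (w @ [h]) p), False) # z @ u')"
    by (simp add: gen endpos_snoc flip: q_def)
  finally show ?case using z u' u(3) by (intro exI[of _ "z @ u'"]) simp
qed

lemma theta_Inr:
  assumes "fvb_word n w" "p \<in> {1..n}"
  shows "\<exists>q\<in>{1..n}. theta w (Inr p) = [(Inr q, False)]"
  using assms(1)
proof (induction w rule: rev_induct)
  case (snoc h w)
  have w: "fvb_word n w" and h: "1 \<le> gidx h" "gidx h < n"
    using snoc.prems by (auto simp: fvb_word_snoc)
  obtain q where q: "q \<in> {1..n}" "theta w (Inr p) = [(Inr q, False)]"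
    using snoc.IH[OF w] by blast
  obtain q' where q': "q' \<in> {1..n}" "subst_letter (theta_gen h) (Inr q, False) = [(Inr q', False)]"
    using subst_letter_theta_gen_Inr[OF q(1) h] by blast
  then have "theta (w @ [h]) (Inr p) = [(Inr q', False)]"
    by (simp add: theta_snoc q(2) fsubst_eq freduce_Cons_eq)
  then show ?case using q' by blast
qed (use assms(2) in \<open>simp add: theta_Nil\<close>)

section \<open>Computation of the group of a braid\<close>

text \<open>The presentation \<open>\<langle>x\<^sub>0, \<dots>, x\<^sub>m\<^sub>-\<^sub>1, y | y\<^sup>g\<rangle>\<close> of the free product of a free group of rank
  \<open>m\<close> with a cyclic group of order \<open>\<bar>g\<bar>\<close>; \<open>Inl c\<close> stands for \<open>x\<^sub>c\<close> and \<open>Inr 0\<close> for \<open>y\<close>.\<close>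

definition fpc_gens :: "nat \<Rightarrow> (nat + nat) set" where
  "fpc_gens m = Inl ` {..<m} \<union> {Inr 0}"

definition fpc_y :: "(nat + nat) fletter list" where
  "fpc_y = [(Inr 0, False)]"

definition free_prod_cyclic :: "nat \<Rightarrow> int \<Rightarrow> ((nat + nat) fletter list) set monoid" where
  "free_prod_cyclic m g = free_group (fpc_gens m)
     Mod normal_closure (free_group (fpc_gens m)) {fpc_y [^]\<^bsub>free_group (fpc_gens m)\<^esub> g}"

lemma fpc_y_closed: "fpc_y \<in> carrier (free_group (fpc_gens m))"
  unfolding fpc_y_def by (rule letter_in_free_group) (simp add: fpc_gens_def)

lemma fpc_x_closed: "c < m \<Longrightarrow> [(Inl c, False)] \<in> carrier (free_group (fpc_gens m))"
  by (rule letter_in_free_group) (simp add: fpc_gens_def)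

lemma normal_fpc_relator:
  "normal_closure (free_group (fpc_gens m)) {fpc_y [^]\<^bsub>free_group (fpc_gens m)\<^esub> (g::int)}
     \<lhd> free_group (fpc_gens m)"
  using group.int_pow_closed[OF group_free_group fpc_y_closed[of m], of g]
  by (intro group.normal_closure_normal group_free_group) simp

lemma Inl_in_gens: "p \<in> {1..n} \<Longrightarrow> Inl p \<in> gens n"
  by (simp add: gens_def)

lemma Inr_in_gens: "p \<in> {1..n} \<Longrightarrow> Inr p \<in> gens n"
  by (simp add: gens_def)

lemma y_word_closed: "y_word n u \<Longrightarrow> freduce u \<in> carrier (free_group (gens n))"
  by (rule freduce_in_free_group) (auto simp: y_word_def gens_def)

lemma relatorsE:
  assumes "r \<in> relators n w"
  obtains (x) i where "i \<in> {1..n}" "r = freduce (theta w (Inl i) @ [(Inl i, True)])"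
    | (y) i where "i \<in> {1..n}" "r = freduce (theta w (Inr i) @ [(Inr i, True)])"
    | (z) i where "i \<in> {1..n}" "r = freduce [(Inr 1, False), (Inr i, True)]"
  using assms unfolding relators_def by blast

locale flat_braid =
  fixes n :: nat and w :: "fvgen list"
  assumes n_pos: "1 \<le> n" and fvb: "fvb_word n w"
begin

sublocale finite_injection "endpos w" "{1..n}"
  by (rule finite_injection_endpos[OF fvb])

abbreviation "F \<equiv> free_group (gens n)"
abbreviation "N \<equiv> normal_closure F (relators n w)"

lemma theta_Inl_mult:
  assumes "p \<in> {1..n}"
  shows "\<exists>u. theta w (Inl p) = [(Inl (endpos w p), False)] \<otimes>\<^bsub>F\<^esub> freduce u
    \<and> y_word n u \<and> exp_sum u = strand_excess w p"
  using theta_Inl[OF fvb, of p] freduce_Cons_mult by metis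

lemma theta_Inl_closed:
  assumes p: "p \<in> {1..n}"
  shows "theta w (Inl p) \<in> carrier F"
proof -
  interpret F: group F by (rule group_free_group)
  obtain u where "theta w (Inl p) = [(Inl (endpos w p), False)] \<otimes>\<^bsub>F\<^esub> freduce u" "y_word n u"
    using theta_Inl_mult[OF p] by blast
  then show ?thesis
    using letter_in_free_group[OF Inl_in_gens[OF endpos_mem[OF fvb p]]] y_word_closed by simp
qed

lemma relators_closed: "relators n w \<subseteq> carrier F"
proof
  fix r assume "r \<in> relators n w"
  then show "r \<in> carrier F"
  proof (cases rule: relatorsE)
    case (x i)
    then have "\<forall>l\<in>set (theta w (Inl i) @ [(Inl i, True)]). fst l \<in> gens n"
      using theta_Inl_closed[OF x(1)] by (auto simp: carrier_free_group gens_def)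
    then show ?thesis using x(2) freduce_in_free_group by blast
  next
    case (y i)
    then have "\<forall>l\<in>set (theta w (Inr i) @ [(Inr i, True)]). fst l \<in> gens n"
      using theta_Inr[OF fvb y(1)] by (auto simp: gens_def)
    then show ?thesis using y(2) freduce_in_free_group by blast
  next
    case (z i)
    then have "\<forall>l\<in>set [(Inr 1, False), (Inr i, True)]. fst l \<in> gens n"
      using n_pos by (auto simp: gens_def)
    then show ?thesis using z(2) freduce_in_free_group by blast
  qed
qed

lemma normal_N: "N \<lhd> F"
  by (rule group.normal_closure_normal[OF group_free_group relators_closed])

lemma relator_in_N: "r \<in> relators n w \<Longrightarrow> r \<in> N"
  by (rule group.normal_closure_incl[OF group_free_group relators_closed])

lemma group_Gb: "group (Gb n w)"
  unfolding Gb_def by (rule normal.factorgroup_is_group[OF normal_N])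

definition proj :: "(nat + nat) fletter list \<Rightarrow> (nat + nat) fletter list set" where
  "proj u = N #>\<^bsub>F\<^esub> u"

lemma proj_hom: "proj \<in> hom F (Gb n w)"
  unfolding proj_def Gb_def by (rule normal.r_coset_hom_Mod[OF normal_N])

lemma proj_eqI:
  "x \<in> carrier F \<Longrightarrow> y \<in> carrier F \<Longrightarrow> x \<otimes>\<^bsub>F\<^esub> inv\<^bsub>F\<^esub> y \<in> N \<Longrightarrow> proj x = proj y"
  unfolding proj_def using normal.rcos_eq_iff[OF normal_N] by blast

definition x_class :: "nat \<Rightarrow> (nat + nat) fletter list set" where
  "x_class p = proj [(Inl p, False)]"

definition y_class :: "(nat + nat) fletter list set" where
  "y_class = proj [(Inr 1, False)]"

lemma x_class_closed: "p \<in> {1..n} \<Longrightarrow> x_class p \<in> carrier (Gb n w)"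
  unfolding x_class_def using proj_hom letter_in_free_group[OF Inl_in_gens] by (auto simp: hom_def)

lemma y_class_closed: "y_class \<in> carrier (Gb n w)"
  unfolding y_class_def using proj_hom letter_in_free_group[OF Inr_in_gens, of 1] n_pos
  by (auto simp: hom_def)

lemma proj_y_letter:
  assumes j: "j \<in> {1..n}"
  shows "proj [(Inr j, False)] = y_class"
proof -
  have one: "1 \<in> {1..n}" using n_pos by simp
  have "[(Inr 1, False)] \<otimes>\<^bsub>F\<^esub> inv\<^bsub>F\<^esub> [(Inr j, False)] = freduce [(Inr 1, False), (Inr j, True)]"
    using inv_free_group_letter[OF Inr_in_gens[OF j]] by (simp add: mult_free_group)
  also have "\<dots> \<in> N" using j by (intro relator_in_N) (auto simp: relators_def)
  finally have "proj [(Inr 1, False)] = proj [(Inr j, False)]"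
    by (rule proj_eqI[OF letter_in_free_group[OF Inr_in_gens[OF one]]
                          letter_in_free_group[OF Inr_in_gens[OF j]]])
  then show ?thesis by (simp add: y_class_def)
qed

lemma proj_y_word: "y_word n u \<Longrightarrow> proj (freduce u) = y_class [^]\<^bsub>Gb n w\<^esub> exp_sum u"
  by (rule hom_freduce_eq_pow_exp_sum[OF group_Gb proj_hom y_class_closed])
     (auto simp: y_word_def gens_def proj_y_letter)

lemma x_class_step:
  assumes p: "p \<in> {1..n}"
  shows "x_class p = x_class (endpos w p) \<otimes>\<^bsub>Gb n w\<^esub> y_class [^]\<^bsub>Gb n w\<^esub> strand_excess w p"
proof -
  obtain u where u: "theta w (Inl p) = [(Inl (endpos w p), False)] \<otimes>\<^bsub>F\<^esub> freduce u"
    "y_word n u" "exp_sum u = strand_excess w p"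
    using theta_Inl_mult[OF p] by blast
  have "theta w (Inl p) \<otimes>\<^bsub>F\<^esub> inv\<^bsub>F\<^esub> [(Inl p, False)] = freduce (theta w (Inl p) @ [(Inl p, True)])"
    using inv_free_group_letter[OF Inl_in_gens[OF p]] by (simp add: mult_free_group)
  also have "\<dots> \<in> N" using p by (intro relator_in_N) (auto simp: relators_def)
  finally have "proj (theta w (Inl p)) = x_class p"
    unfolding x_class_def
    by (rule proj_eqI[OF theta_Inl_closed[OF p] letter_in_free_group[OF Inl_in_gens[OF p]]])
  moreover have "proj (theta w (Inl p)) = x_class (endpos w p) \<otimes>\<^bsub>Gb n w\<^esub> proj (freduce u)"
    unfolding x_class_def u(1)
    using hom_mult[OF proj_hom letter_in_free_group[OF Inl_in_gens[OF endpos_mem[OF fvb p]]]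
        y_word_closed[OF u(2)]] .
  ultimately show ?thesis using proj_y_word[OF u(2)] u(3) by simp
qed

lemma x_class_funpow:
  assumes r: "r \<in> {1..n}"
  shows "x_class r = x_class ((endpos w ^^ j) r) \<otimes>\<^bsub>Gb n w\<^esub> y_class [^]\<^bsub>Gb n w\<^esub> path_sum (strand_excess w) r j"
proof (induction j)
  interpret Q: group "Gb n w" by (rule group_Gb)
  {
    case 0
    show ?case using x_class_closed[OF r] by simp
  next
    case (Suc j)
    let ?p = "(endpos w ^^ j) r"
    have p: "?p \<in> {1..n}" by (rule funpow_closed[OF r])
    show ?case
      using Suc x_class_step[OF p] x_class_closed[OF endpos_mem[OF fvb p]] y_class_closed
      by (simp add: Q.m_assoc path_sum_Suc add.commute flip: Q.int_pow_mult)
  }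
qed

lemma x_class_orbit_min:
  assumes p: "p \<in> {1..n}"
  shows "x_class p = x_class (orbit_min p) \<otimes>\<^bsub>Gb n w\<^esub> y_class [^]\<^bsub>Gb n w\<^esub> potential (strand_excess w) p"
proof -
  interpret Q: group "Gb n w" by (rule group_Gb)
  have "x_class (orbit_min p) = x_class p \<otimes>\<^bsub>Gb n w\<^esub>
      y_class [^]\<^bsub>Gb n w\<^esub> path_sum (strand_excess w) (orbit_min p) (steps_from_min p)"
    using x_class_funpow[OF orbit_min_closed[OF p], of "steps_from_min p"] funpow_steps_from_min[OF p]
    by simp
  then show ?thesis
    using x_class_closed[OF p] x_class_closed[OF orbit_min_closed[OF p]] y_class_closed
    by (simp add: potential_def Q.int_pow_neg Q.inv_solve_right)
qed

lemma y_class_pow_period_sum: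
  assumes r: "r \<in> {1..n}"
  shows "y_class [^]\<^bsub>Gb n w\<^esub> path_sum (strand_excess w) r (period r) = \<one>\<^bsub>Gb n w\<^esub>"
proof -
  interpret Q: group "Gb n w" by (rule group_Gb)
  have "x_class r = x_class r \<otimes>\<^bsub>Gb n w\<^esub> y_class [^]\<^bsub>Gb n w\<^esub> path_sum (strand_excess w) r (period r)"
    using x_class_funpow[OF r, of "period r"] funpow_period[OF r] by simp
  then show ?thesis using Q.l_cancel_one'[OF x_class_closed[OF r] Q.int_pow_closed[OF y_class_closed]] by blast
qed

definition reps :: "nat list" where
  "reps = filter (is_rep w) [1..<Suc n]"

abbreviation "m \<equiv> length reps"

definition rep_index :: "nat \<Rightarrow> nat" where
  "rep_index = inv_into {..<m} ((!) reps)"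

lemma closure_eq: "closure n w = map (comp_word w) reps"
  by (simp add: closure_def reps_def)

lemma set_reps: "set reps = {p \<in> {1..n}. is_rep w p}"
  by (auto simp: reps_def)

lemma bij_betw_nth_reps: "bij_betw ((!) reps) {..<m} (set reps)"
  by (rule bij_betw_nth) (auto simp: reps_def)

lemma orbit_min_in_reps: "p \<in> {1..n} \<Longrightarrow> orbit_min p \<in> set reps"
  using orbit_min_closed orbit_min_le_funpow by (auto simp: set_reps is_rep_def)

lemma reps_closed: "r \<in> set reps \<Longrightarrow> r \<in> {1..n}"
  by (simp add: set_reps)

lemma orbit_min_rep: "r \<in> set reps \<Longrightarrow> orbit_min r = r"
  using orbit_min_eqI by (auto simp: set_reps is_rep_def)

lemma rep_index_less: "r \<in> set reps \<Longrightarrow> rep_index r < m"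
  using bij_betw_inv_into[OF bij_betw_nth_reps] unfolding rep_index_def bij_betw_def by auto

lemma nth_rep_index: "r \<in> set reps \<Longrightarrow> reps ! rep_index r = r"
  unfolding rep_index_def by (rule bij_betw_inv_into_right[OF bij_betw_nth_reps])

lemma rep_index_nth: "c < m \<Longrightarrow> rep_index (reps ! c) = c"
  unfolding rep_index_def using bij_betw_inv_into_left[OF bij_betw_nth_reps] by simp

lemma head_excess_comp_word:
  "head_excess (comp_word w r) = path_sum (strand_excess w) r (period r)"
  unfolding comp_word_def orbit_len_def period_def path_sum_def strand_excess_def
    head_excess_concat_upt ..

definition excess_gcd :: int where
  "excess_gcd = Gcd (set (map head_excess (closure n w)))"

lemma excess_gcd_dvd: "r \<in> set reps \<Longrightarrow> excess_gcd dvd path_sum (strand_excess w) r (period r)"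
  unfolding excess_gcd_def head_excess_comp_word[symmetric] closure_eq by (rule Gcd_dvd) simp

lemma y_class_pow_excess_gcd: "y_class [^]\<^bsub>Gb n w\<^esub> excess_gcd = \<one>\<^bsub>Gb n w\<^esub>"
proof -
  interpret Q: group "Gb n w" by (rule group_Gb)
  have "int (Q.ord y_class) dvd t" if "t \<in> set (map head_excess (closure n w))" for t
    using that y_class_pow_period_sum reps_closed Q.int_pow_eq_id[OF y_class_closed]
    by (auto simp: closure_eq head_excess_comp_word)
  then show ?thesis
    unfolding excess_gcd_def by (simp add: Q.int_pow_eq_id[OF y_class_closed] Gcd_greatest)
qed

abbreviation "P \<equiv> free_group (fpc_gens m)"
abbreviation "M \<equiv> normal_closure P {fpc_y [^]\<^bsub>P\<^esub> excess_gcd}"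
abbreviation "comp_gen p \<equiv> [(Inl (rep_index (orbit_min p)), False)]"

text \<open>\<open>phi\<close> sends \<open>x\<^sub>p\<close> to \<open>x\<^sub>c y\<^bsup>e\<^esup>\<close>, with \<open>c\<close> the component of \<open>p\<close> and \<open>e\<close> the potential
  of \<open>p\<close>; this turns each relation \<open>x\<^sub>p = x\<^bsub>\<pi>(p)\<^esub> y\<^bsup>k(p)\<^esup>\<close> into a conjugate of a power of
  \<open>y\<^bsup>g\<^esup>\<close>.\<close>

definition phi :: "nat + nat \<Rightarrow> (nat + nat) fletter list" where
  "phi a = (case a of
      Inl p \<Rightarrow> comp_gen p \<otimes>\<^bsub>P\<^esub> fpc_y [^]\<^bsub>P\<^esub> potential (strand_excess w) p
    | Inr j \<Rightarrow> fpc_y)"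

definition psi :: "nat + nat \<Rightarrow> (nat + nat) fletter list" where
  "psi a = (case a of Inl c \<Rightarrow> [(Inl (reps ! c), False)] | Inr j \<Rightarrow> [(Inr 1, False)])"

lemma comp_gen_closed: "p \<in> {1..n} \<Longrightarrow> comp_gen p \<in> carrier P"
  by (rule fpc_x_closed[OF rep_index_less[OF orbit_min_in_reps]])

lemma normal_M: "M \<lhd> P"
  by (rule normal_fpc_relator)

lemma fpc_relator_in_M: "fpc_y [^]\<^bsub>P\<^esub> excess_gcd \<in> M"
  using group.int_pow_closed[OF group_free_group fpc_y_closed]
  by (intro group.normal_closure_incl[OF group_free_group]) auto

lemma phi_closed:
  assumes "a \<in> gens n"
  shows "phi a \<in> carrier P"
proof -
  interpret P: group P by (rule group_free_group)
  show ?thesis using assms comp_gen_closed fpc_y_closed by (auto simp: gens_def phi_def)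
qed

lemma psi_closed: "a \<in> fpc_gens m \<Longrightarrow> psi a \<in> carrier F"
  using n_pos reps_closed
  by (auto simp: fpc_gens_def psi_def gens_def intro!: letter_in_free_group)

lemma hom_fsubst_phi: "fsubst phi \<in> hom F P"
  by (rule fsubst_hom[OF phi_closed])

lemma hom_fsubst_psi: "fsubst psi \<in> hom P F"
  by (rule fsubst_hom[OF psi_closed])

lemma fsubst_phi_letter: "a \<in> gens n \<Longrightarrow> fsubst phi [(a, False)] = phi a"
  by (simp add: fsubst_letter freduce_carrier[OF phi_closed])

lemma fsubst_psi_letter: "a \<in> fpc_gens m \<Longrightarrow> fsubst psi [(a, False)] = psi a"
  by (simp add: fsubst_letter freduce_carrier[OF psi_closed])

lemma fsubst_phi_theta_Inl:
  assumes p: "p \<in> {1..n}"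
  shows "fsubst phi (theta w (Inl p)) = phi (Inl (endpos w p)) \<otimes>\<^bsub>P\<^esub> fpc_y [^]\<^bsub>P\<^esub> strand_excess w p"
proof -
  obtain u where u: "theta w (Inl p) = [(Inl (endpos w p), False)] \<otimes>\<^bsub>F\<^esub> freduce u"
    "y_word n u" "exp_sum u = strand_excess w p"
    using theta_Inl_mult[OF p] by blast
  have q: "Inl (endpos w p) \<in> gens n" by (rule Inl_in_gens[OF endpos_mem[OF fvb p]])
  have "fsubst phi (freduce u) = fpc_y [^]\<^bsub>P\<^esub> exp_sum u"
    by (rule hom_freduce_eq_pow_exp_sum[OF group_free_group hom_fsubst_phi fpc_y_closed])
       (use u(2) in \<open>auto simp: y_word_def gens_def fsubst_phi_letter phi_def\<close>)
  then show ?thesis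
    using u hom_mult[OF hom_fsubst_phi letter_in_free_group[OF q] y_word_closed[OF u(2)]]
      fsubst_phi_letter[OF q]
    by simp
qed

lemma fsubst_phi_x_relator:
  assumes i: "i \<in> {1..n}"
  shows "fsubst phi (freduce (theta w (Inl i) @ [(Inl i, True)])) =
    comp_gen i \<otimes>\<^bsub>P\<^esub>
      fpc_y [^]\<^bsub>P\<^esub> (potential (strand_excess w) (endpos w i) + strand_excess w i
                        - potential (strand_excess w) i)
    \<otimes>\<^bsub>P\<^esub> inv\<^bsub>P\<^esub> comp_gen i"
proof -
  interpret P: group P by (rule group_free_group)
  interpret phi: group_hom F P "fsubst phi"
    by (simp add: group_hom_def group_hom_axioms_def group_free_group hom_fsubst_phi)
  have x: "[(Inl i, False)] \<in> carrier F" by (rule letter_in_free_group[OF Inl_in_gens[OF i]])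
  have "freduce (theta w (Inl i) @ [(Inl i, True)]) = theta w (Inl i) \<otimes>\<^bsub>F\<^esub> inv\<^bsub>F\<^esub> [(Inl i, False)]"
    using inv_free_group_letter[OF Inl_in_gens[OF i]] by (simp add: mult_free_group)
  then have "fsubst phi (freduce (theta w (Inl i) @ [(Inl i, True)])) =
      fsubst phi (theta w (Inl i)) \<otimes>\<^bsub>P\<^esub> inv\<^bsub>P\<^esub> phi (Inl i)"
    using theta_Inl_closed[OF i] x fsubst_phi_letter[OF Inl_in_gens[OF i]] by simp
  also have "\<dots> = comp_gen i \<otimes>\<^bsub>P\<^esub> fpc_y [^]\<^bsub>P\<^esub> potential (strand_excess w) (endpos w i)
      \<otimes>\<^bsub>P\<^esub> fpc_y [^]\<^bsub>P\<^esub> strand_excess w i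
      \<otimes>\<^bsub>P\<^esub> inv\<^bsub>P\<^esub> (comp_gen i \<otimes>\<^bsub>P\<^esub> fpc_y [^]\<^bsub>P\<^esub> potential (strand_excess w) i)"
    using fsubst_phi_theta_Inl[OF i] orbit_min_step[OF i] by (simp add: phi_def)
  also have "\<dots> = comp_gen i \<otimes>\<^bsub>P\<^esub>
      fpc_y [^]\<^bsub>P\<^esub> (potential (strand_excess w) (endpos w i) + strand_excess w i
                        - potential (strand_excess w) i)
    \<otimes>\<^bsub>P\<^esub> inv\<^bsub>P\<^esub> comp_gen i"
    using comp_gen_closed[OF i] fpc_y_closed
    by (simp add: P.inv_mult_group P.m_assoc P.int_pow_diff P.int_pow_mult)
  finally show ?thesis .
qed

lemma fsubst_phi_y_relator:
  assumes "j \<in> {1..n}" "k \<in> {1..n}"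
  shows "fsubst phi (freduce [(Inr j, False), (Inr k, True)]) = \<one>\<^bsub>P\<^esub>"
proof -
  interpret phi: group_hom F P "fsubst phi"
    by (simp add: group_hom_def group_hom_axioms_def group_free_group hom_fsubst_phi)
  have "freduce [(Inr j, False), (Inr k, True)] = [(Inr j, False)] \<otimes>\<^bsub>F\<^esub> inv\<^bsub>F\<^esub> [(Inr k, False)]"
    using inv_free_group_letter[OF Inr_in_gens[OF assms(2)]] by (simp add: mult_free_group)
  then show ?thesis
    using assms letter_in_free_group[OF Inr_in_gens] fsubst_phi_letter[OF Inr_in_gens] fpc_y_closed
    by (simp add: phi_def)
qed

lemma fsubst_phi_relator: "r \<in> relators n w \<Longrightarrow> fsubst phi r \<in> M"
proof -
  interpret P: group P by (rule group_free_group)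
  interpret M: normal M P by (rule normal_M)
  assume "r \<in> relators n w"
  then show ?thesis
  proof (cases rule: relatorsE)
    case (x i)
    let ?e = "potential (strand_excess w) (endpos w i) + strand_excess w i
      - potential (strand_excess w) i"
    obtain t where t: "?e = excess_gcd * t"
      using dvd_trans[OF excess_gcd_dvd[OF orbit_min_in_reps[OF x(1)]]
          period_sum_dvd_potential_step[OF x(1)]]
      by (auto elim: dvdE)
    have "(fpc_y [^]\<^bsub>P\<^esub> excess_gcd) [^]\<^bsub>P\<^esub> t \<in> M"
      by (rule P.subgroup_int_pow_closed[OF M.subgroup_axioms fpc_relator_in_M])
    then have "fpc_y [^]\<^bsub>P\<^esub> ?e \<in> M"
      using t fpc_y_closed by (simp add: P.int_pow_pow)
    then show ?thesis
      using x(2) fsubst_phi_x_relator[OF x(1)] M.inv_op_closed2[OF comp_gen_closed[OF x(1)]]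
      by simp
  next
    case (y i)
    obtain q where "q \<in> {1..n}" "theta w (Inr i) = [(Inr q, False)]"
      using theta_Inr[OF fvb y(1)] by blast
    then show ?thesis using fsubst_phi_y_relator y by (simp add: M.one_closed)
  next
    case (z i)
    then show ?thesis using fsubst_phi_y_relator n_pos by (simp add: M.one_closed)
  qed
qed

lemma fsubst_phi_N: "x \<in> N \<Longrightarrow> fsubst phi x \<in> M"
  by (rule hom_normal_closure_mem[OF group_free_group group_free_group hom_fsubst_phi normal_M
        relators_closed fsubst_phi_relator])

lemma fsubst_psi_M: "y \<in> M \<Longrightarrow> fsubst psi y \<in> N"
proof (rule hom_normal_closure_mem[OF group_free_group group_free_group hom_fsubst_psi normal_N])
  show "{fpc_y [^]\<^bsub>P\<^esub> excess_gcd} \<subseteq> carrier P"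
    using group.int_pow_closed[OF group_free_group fpc_y_closed] by simp
next
  fix a assume "a \<in> {fpc_y [^]\<^bsub>P\<^esub> excess_gcd}"
  then have a: "fsubst psi a = [(Inr 1, False)] [^]\<^bsub>F\<^esub> excess_gcd"
    using hom_int_pow[OF hom_fsubst_psi fpc_y_closed group_free_group group_free_group]
      fsubst_psi_letter[of "Inr 0"]
    by (simp add: fpc_y_def fpc_gens_def psi_def)
  have y1: "[(Inr 1, False)] \<in> carrier F"
    using letter_in_free_group[OF Inr_in_gens] n_pos by simp
  have "N #>\<^bsub>F\<^esub> fsubst psi a = N"
    using a hom_int_pow[OF proj_hom y1 group_free_group group_Gb] y_class_pow_excess_gcd
    by (simp add: y_class_def proj_def Gb_def)
  moreover have "fsubst psi a \<in> carrier F"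
    using a y1 group.int_pow_closed[OF group_free_group] by simp
  ultimately show "fsubst psi a \<in> N"
    by (rule group.coset_join1[OF group_free_group _ _ normal_imp_subgroup[OF normal_N]])
qed

lemma coset_fsubst_psi_phi:
  assumes x: "x \<in> carrier F"
  shows "N #>\<^bsub>F\<^esub> fsubst psi (fsubst phi x) = N #>\<^bsub>F\<^esub> x"
proof -
  have "proj (fsubst psi (fsubst phi x)) = proj x"
  proof (rule free_group_hom_eqI[OF hom_compose[OF hom_compose[OF hom_fsubst_phi hom_fsubst_psi] proj_hom,
          unfolded comp_def] proj_hom group_Gb _ x])
    fix a assume a: "a \<in> gens n"
    show "proj (fsubst psi (fsubst phi [(a, False)])) = proj [(a, False)]"
    proof (cases a)
      case (Inl p)
      then have p: "p \<in> {1..n}" using a by (auto simp: gens_def)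
      have r: "orbit_min p \<in> set reps" by (rule orbit_min_in_reps[OF p])
      have y1: "[(Inr 1, False)] \<in> carrier F"
        using letter_in_free_group[OF Inr_in_gens] n_pos by simp
      have xr: "[(Inl (orbit_min p), False)] \<in> carrier F"
        by (rule letter_in_free_group[OF Inl_in_gens[OF orbit_min_closed[OF p]]])
      have "fsubst psi (fsubst phi [(a, False)])
          = fsubst psi (comp_gen p) \<otimes>\<^bsub>F\<^esub> fsubst psi fpc_y [^]\<^bsub>F\<^esub> potential (strand_excess w) p"
        using fsubst_phi_letter[OF a] Inl comp_gen_closed[OF p] fpc_y_closed
          hom_int_pow[OF hom_fsubst_psi fpc_y_closed group_free_group group_free_group]
          group.int_pow_closed[OF group_free_group fpc_y_closed]
        by (simp add: phi_def hom_mult[OF hom_fsubst_psi])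
      also have "\<dots> = [(Inl (orbit_min p), False)] \<otimes>\<^bsub>F\<^esub>
          [(Inr 1, False)] [^]\<^bsub>F\<^esub> potential (strand_excess w) p"
        using fsubst_psi_letter[of "Inl (rep_index (orbit_min p))"] fsubst_psi_letter[of "Inr 0"]
          rep_index_less[OF r] nth_rep_index[OF r]
        by (simp add: fpc_gens_def psi_def fpc_y_def)
      finally have "proj (fsubst psi (fsubst phi [(a, False)])) =
          x_class (orbit_min p) \<otimes>\<^bsub>Gb n w\<^esub> y_class [^]\<^bsub>Gb n w\<^esub> potential (strand_excess w) p"
        unfolding x_class_def y_class_def
        using hom_mult[OF proj_hom xr] hom_int_pow[OF proj_hom y1 group_free_group group_Gb]
          group.int_pow_closed[OF group_free_group y1]
        by simp
      then show ?thesis using x_class_orbit_min[OF p] by (simp add: x_class_def Inl)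
    next
      case (Inr j)
      then have j: "j \<in> {1..n}" using a by (auto simp: gens_def)
      have "fsubst psi (fsubst phi [(a, False)]) = [(Inr 1, False)]"
        using fsubst_phi_letter[OF a] Inr fsubst_psi_letter[of "Inr 0"]
        by (simp add: phi_def fpc_y_def fpc_gens_def psi_def)
      then show ?thesis using proj_y_letter[OF j] Inr by (simp add: y_class_def)
    qed
  qed
  then show ?thesis by (simp add: proj_def)
qed

lemma coset_fsubst_phi_psi:
  assumes y: "y \<in> carrier P"
  shows "M #>\<^bsub>P\<^esub> fsubst phi (fsubst psi y) = M #>\<^bsub>P\<^esub> y"
proof (rule free_group_hom_eqI[OF _ normal.r_coset_hom_Mod[OF normal_M]
      normal.factorgroup_is_group[OF normal_M] _ y])
  show "(\<lambda>y. M #>\<^bsub>P\<^esub> fsubst phi (fsubst psi y)) \<in> hom P (P Mod M)"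
    using hom_compose[OF hom_compose[OF hom_fsubst_psi hom_fsubst_phi]
        normal.r_coset_hom_Mod[OF normal_M]]
    by (simp add: comp_def)
next
  fix a assume a: "a \<in> fpc_gens m"
  show "M #>\<^bsub>P\<^esub> fsubst phi (fsubst psi [(a, False)]) = M #>\<^bsub>P\<^esub> [(a, False)]"
  proof (cases a)
    case (Inl c)
    then have c: "c < m" using a by (auto simp: fpc_gens_def)
    then have r: "reps ! c \<in> set reps" by simp
    have "fsubst phi (fsubst psi [(a, False)]) = phi (Inl (reps ! c))"
      using fsubst_psi_letter[OF a] Inl fsubst_phi_letter[OF Inl_in_gens[OF reps_closed[OF r]]]
      by (simp add: psi_def)
    also have "\<dots> = [(a, False)]"
      using orbit_min_rep[OF r] rep_index_nth[OF c] fpc_x_closed[OF c] Inl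
        potential_orbit_min[OF orbit_min_rep[OF r]]
      by (simp add: phi_def monoid.r_one[OF group.is_monoid[OF group_free_group]])
    finally show ?thesis by simp
  next
    case (Inr j)
    then have "a = Inr 0" using a by (auto simp: fpc_gens_def)
    then have "fsubst phi (fsubst psi [(a, False)]) = fpc_y"
      using fsubst_psi_letter[OF a] fsubst_phi_letter[OF Inr_in_gens[of 1]] n_pos
      by (simp add: psi_def phi_def)
    then show ?thesis using \<open>a = Inr 0\<close> by (simp add: fpc_y_def)
  qed
qed

theorem Gb_iso: "Gb n w \<cong> free_prod_cyclic m excess_gcd"
  unfolding Gb_def free_prod_cyclic_def
  by (rule FactGroup_iso_by_inverse_homs[OF group_free_group group_free_group normal_N normal_M
        hom_fsubst_phi hom_fsubst_psi fsubst_phi_N fsubst_psi_M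
        coset_fsubst_psi_phi coset_fsubst_phi_psi])

end

lemma Gb_iso_free_prod_cyclic:
  assumes "1 \<le> n" "fvb_word n w"
  shows "Gb n w \<cong> free_prod_cyclic (length (closure n w)) (Gcd (set (map head_excess (closure n w))))"
proof -
  interpret flat_braid n w using assms by unfold_locales
  show ?thesis using Gb_iso by (simp add: closure_eq excess_gcd_def)
qed

theorem theorem8:
  fixes n n' :: nat and w w' :: "fvgen list"
  assumes "1 \<le> n" and "1 \<le> n'"
    and "fvb_word n w" and "fvb_word n' w'"
    and "flat_equiv (closure n w) (closure n' w')"
  shows "Gb n w \<cong> Gb n' w'"
proof -
  have excesses: "mset (map head_excess (closure n w)) = mset (map head_excess (closure n' w'))"
    by (rule flat_equiv_head_excess[OF assms(5)])
  then have "length (closure n w) = length (closure n' w')"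
    by (metis length_map size_mset)
  moreover have "set (map head_excess (closure n w)) = set (map head_excess (closure n' w'))"
    using excesses by (metis set_mset_mset)
  ultimately have "Gb n' w' \<cong> free_prod_cyclic (length (closure n w)) (Gcd (set (map head_excess (closure n w))))"
    using Gb_iso_free_prod_cyclic[OF assms(2,4)] by simp
  moreover have "group (Gb n' w')"
    using assms(2,4) by (intro flat_braid.group_Gb flat_braid.intro)
  ultimately show ?thesis
    using Gb_iso_free_prod_cyclic[OF assms(1,3)] by (metis group.iso_sym iso_trans)
qed

end
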